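(* There exist a financial system $S$ in the base model (all contracts of the same priority) and distinct banks $u_1,u_2,v_1,v_2$, with a debt contract of positive weight from $u_1$ to $v_1$ and one from $u_2$ to $v_2$, such that the following holds. For $(s_1,s_2)\in\{C,D\}^2$ let $S_{s_1s_2}$ be the system obtained from $S$ by deleting the debt contract from $u_i$ to $v_i$ for exactly those $i$ with $s_i=C$. Then each $S_{s_1s_2}$ has exactly one solution, and the payoffs $(q_{v_1},q_{v_2})$ at that solution are $(3,3)$ for $CC$, $(1,1)$ for $DD$, $(0,1)$ for $CD$, and $(1,0)$ for $DC$. In particular, in the two-player game where $v_i$ chooses $s_i$ and receives its payoff in $S_{s_1s_2}$, both $CC$ and $DD$ are pure Nash equilibria, and $CC$ gives each player strictly more than any other profile.
   Context: A financial system with payment priorities consists of: a finite set $V$ of banks; external assets $e_v\ge 0$ for each $v\in V$; a number $P\ge 1$ of priority levels; and a finite set of contracts, each of which is either a debt contract from a debtor $u$ to a creditor $v\neq u$ with weight $c>0$, or a credit default swap (CDS) from a debtor $u$ to a creditor $v\neq u$ in reference to a bank $w\notin\{u,v\}$ (the reference entity) with weight $c>0$. Every contract has a priority in $\{1,\dots,P\}$ (1 is the highest priority). It is assumed that every bank that is the reference entity of some CDS is the debtor of at least one debt contract of positive weight. Given a recovery rate vector $r\in[0,1]^V$: the liability of a contract $k$ is $l_k(r)=c$ if $k$ is a debt of weight $c$, and $l_k(r)=c\,(1-r_w)$ if $k$ is a CDS of weight $c$ in reference to $w$. For a bank $v$, $l_v(r)$ is the sum of the liabilities of the contracts with debtor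 $v$; $l_v^{(\rho)}(r)$ is the sum of the liabilities of contracts with debtor $v$ and priority $\rho$; and $l_v^{(\le\rho)}(r)=\sum_{i=1}^{\rho}l_v^{(i)}(r)$ (with $l_v^{(\le 0)}=0$). The payment on a contract $k$ with debtor $v$ and priority $\rho$ is $p_k(r)=l_k(r)\cdot\min\{1,\max\{0,(r_v l_v(r)-l_v^{(\le\rho-1)}(r))/l_v^{(\rho)}(r)\}\}$ (and $p_k(r)=0$ if $l_v^{(\rho)}(r)=0$). The assets of $v$ are $a_v(r)=e_v+\sum_k p_k(r)$, summing over contracts $k$ with creditor $v$. A vector $r\in[0,1]^V$ is a solution (clearing vector) if for every $v\in V$: $r_v=1$ when $a_v(r)\ge l_v(r)$, and $r_v=a_v(r)/l_v(r)$ when $a_v(r)<l_v(r)$. The payoff of $v$ is $q_v(r)=\max\{a_v(r)-l_v(r),0\}$. When $P=1$, payments reduce to $p_k(r)=r_v\,l_k(r)$ (principle of proportionality); this is called the base model. *)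

theory Defs
  imports Complex_Main "HOL-Library.Multiset"
begin

text \<open>Contracts: Debt debtor creditor weight priority;
  CDS debtor creditor reference weight priority.\<close>
datatype 'b contract =
    Debt 'b 'b real nat
  | CDS 'b 'b 'b real nat

fun debtor :: "'b contract \<Rightarrow> 'b" where
  "debtor (Debt u v c p) = u"
| "debtor (CDS u v w c p) = u"

fun creditor :: "'b contract \<Rightarrow> 'b" where
  "creditor (Debt u v c p) = v"
| "creditor (CDS u v w c p) = v"

fun weight :: "'b contract \<Rightarrow> real" where
  "weight (Debt u v c p) = c"
| "weight (CDS u v w c p) = c"

fun prio :: "'b contract \<Rightarrow> nat" where
  "prio (Debt u v c p) = p"
| "prio (CDS u v w c p) = p"

record 'b fsys =
  banks :: "'b set"
  ext :: "'b \<Rightarrow> real"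
  nprio :: nat
  contracts :: "'b contract multiset"

definition wf_contract :: "'b fsys \<Rightarrow> 'b contract \<Rightarrow> bool" where
  "wf_contract S k = (case k of
      Debt u v c p \<Rightarrow> u \<in> banks S \<and> v \<in> banks S \<and> u \<noteq> v \<and> c > 0 \<and> 1 \<le> p \<and> p \<le> nprio S
    | CDS u v w c p \<Rightarrow> u \<in> banks S \<and> v \<in> banks S \<and> w \<in> banks S \<and> u \<noteq> v \<and> w \<noteq> u \<and> w \<noteq> v
          \<and> c > 0 \<and> 1 \<le> p \<and> p \<le> nprio S)"

definition wf_fsys :: "'b fsys \<Rightarrow> bool" where
  "wf_fsys S = (finite (banks S) \<and> (\<forall>v\<in>banks S. ext S v \<ge> 0) \<and> nprio S \<ge> 1
     \<and> (\<forall>k\<in>#contracts S. wf_contract S k)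
     \<and> (\<forall>u v w c p. CDS u v w c p \<in># contracts S \<longrightarrow>
          (\<exists>x c' p'. Debt w x c' p' \<in># contracts S \<and> c' > 0)))"

definition base_model :: "'b fsys \<Rightarrow> bool" where
  "base_model S = (wf_fsys S \<and> nprio S = 1)"

fun liab :: "('b \<Rightarrow> real) \<Rightarrow> 'b contract \<Rightarrow> real" where
  "liab r (Debt u v c p) = c"
| "liab r (CDS u v w c p) = c * (1 - r w)"

definition liab_bank :: "'b fsys \<Rightarrow> ('b \<Rightarrow> real) \<Rightarrow> 'b \<Rightarrow> real" where
  "liab_bank S r v = sum_mset (image_mset (liab r) (filter_mset (\<lambda>k. debtor k = v) (contracts S)))"

definition liab_prio :: "'b fsys \<Rightarrow> ('b \<Rightarrow> real) \<Rightarrow> 'b \<Rightarrow> nat \<Rightarrow> real" where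
  "liab_prio S r v \<rho> = sum_mset (image_mset (liab r)
      (filter_mset (\<lambda>k. debtor k = v \<and> prio k = \<rho>) (contracts S)))"

definition liab_le :: "'b fsys \<Rightarrow> ('b \<Rightarrow> real) \<Rightarrow> 'b \<Rightarrow> nat \<Rightarrow> real" where
  "liab_le S r v \<rho> = (\<Sum>i=1..\<rho>. liab_prio S r v i)"

definition payment :: "'b fsys \<Rightarrow> ('b \<Rightarrow> real) \<Rightarrow> 'b contract \<Rightarrow> real" where
  "payment S r k = (let v = debtor k; \<rho> = prio k in
     if liab_prio S r v \<rho> = 0 then 0
     else liab r k * min 1 (max 0 ((r v * liab_bank S r v - liab_le S r v (\<rho> - 1)) / liab_prio S r v \<rho>)))"

definition assets :: "'b fsys \<Rightarrow> ('b \<Rightarrow> real) \<Rightarrow> 'b \<Rightarrow> real" where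
  "assets S r v = ext S v + sum_mset (image_mset (payment S r)
      (filter_mset (\<lambda>k. creditor k = v) (contracts S)))"

definition is_solution :: "'b fsys \<Rightarrow> ('b \<Rightarrow> real) \<Rightarrow> bool" where
  "is_solution S r = (\<forall>v\<in>banks S. 0 \<le> r v \<and> r v \<le> 1
      \<and> (assets S r v \<ge> liab_bank S r v \<longrightarrow> r v = 1)
      \<and> (assets S r v < liab_bank S r v \<longrightarrow> r v = assets S r v / liab_bank S r v))"

definition payoff :: "'b fsys \<Rightarrow> ('b \<Rightarrow> real) \<Rightarrow> 'b \<Rightarrow> real" where
  "payoff S r v = max (assets S r v - liab_bank S r v) 0"

text \<open>Solutions are vectors in [0,1]^V, so two solutions are identified when they agree on V.\<close>
definition unique_solution :: "'b fsys \<Rightarrow> ('b \<Rightarrow> real) \<Rightarrow> bool" where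
  "unique_solution S r = (is_solution S r \<and>
      (\<forall>r'. is_solution S r' \<longrightarrow> (\<forall>v\<in>banks S. r' v = r v)))"

definition delete_contract :: "'b contract \<Rightarrow> 'b fsys \<Rightarrow> 'b fsys" where
  "delete_contract k S = S\<lparr>contracts := contracts S - {#k#}\<rparr>"

text \<open>Strategy profile: True = C (delete own contract), False = D.\<close>
definition subsys :: "'b fsys \<Rightarrow> 'b contract \<Rightarrow> 'b contract \<Rightarrow> bool \<Rightarrow> bool \<Rightarrow> 'b fsys" where
  "subsys S k1 k2 s1 s2 =
     (if s2 then delete_contract k2 else id) ((if s1 then delete_contract k1 else id) S)"

end

theory Submission
  imports Defs
begin

text \<open>Banks u1, u2 hold one unit of cash and owe one unit each to v1, v2 and to a large
  solvent bank, so deleting the debt to v_i raises the recovery rate of u_i from 1/2 to 1.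
  Bank v_i has sold a CDS on u_i, so cooperating lowers its liabilities from 7/2 to 1, but its
  main asset is a debt of 4 owed by an intermediary w_i which bought protection on u_i and sold
  protection on u_j: w_i is solvent iff u_i recovers no more than u_j, and otherwise pays only 1/4.
  Hence v_i earns 3 if both cooperate, 1 if it defects and 0 if it cooperates alone.
  The clearing vector is forced bank by bank: the u_i by their cash alone, the large bank by
  its cash, then the w_i, then the v_i.\<close>

lemma sum_mset_nonneg:
  fixes f :: "'a \<Rightarrow> 'b :: ordered_comm_monoid_add"
  shows "\<forall>x\<in>#M. 0 \<le> f x \<Longrightarrow> 0 \<le> sum_mset (image_mset f M)"
  by (induction M) simp_all

lemma sum_mset_member_le:
  fixes f :: "'a \<Rightarrow> 'b :: ordered_comm_monoid_add"
  assumes "x \<in># M" and "\<forall>y\<in>#M. 0 \<le> f y"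
  shows "f x \<le> sum_mset (image_mset f M)"
proof -
  obtain A where M: "M = add_mset x A" using multi_member_split[OF assms(1)] by blast
  with assms(2) have "0 \<le> sum_mset (image_mset f A)" by (simp add: sum_mset_nonneg)
  then show ?thesis by (simp add: M add_increasing2)
qed

lemma liab_prio_single_level:
  assumes "\<forall>k\<in>#contracts S. prio k = 1"
  shows "liab_prio S r v 1 = liab_bank S r v"
  unfolding liab_prio_def liab_bank_def
  using assms by (metis (mono_tags, lifting) filter_mset_cong0 mem_Collect_eq set_mset_filter)

lemma payment_proportional:
  assumes prio: "\<forall>k\<in>#contracts S. prio k = 1" and k: "k \<in># contracts S"
    and rate: "0 \<le> r (debtor k)" "r (debtor k) \<le> 1"
    and nonneg: "\<forall>k\<in>#contracts S. 0 \<le> liab r k"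
  shows "payment S r k = r (debtor k) * liab r k"
proof -
  let ?v = "debtor k"
  have level: "prio k = 1" and total: "liab_prio S r ?v 1 = liab_bank S r ?v"
    using prio k liab_prio_single_level[OF prio] by auto
  show ?thesis
  proof (cases "liab_bank S r ?v = 0")
    case True
    have "liab r k \<le> liab_bank S r ?v"
      unfolding liab_bank_def using k nonneg by (intro sum_mset_member_le) auto
    with True nonneg k have "liab r k = 0" by force
    with True total level show ?thesis by (simp add: payment_def)
  next
    case False
    with total level rate show ?thesis by (simp add: payment_def liab_le_def)
  qed
qed

lemma assets_proportional:
  assumes prio: "\<forall>k\<in>#contracts S. prio k = 1"
    and bounds: "\<forall>k\<in>#contracts S. 0 \<le> r (debtor k) \<and> r (debtor k) \<le> 1 \<and> 0 \<le> liab r k"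
  shows "assets S r v = ext S v
    + sum_mset (image_mset (\<lambda>k. r (debtor k) * liab r k) (filter_mset (\<lambda>k. creditor k = v) (contracts S)))"
  unfolding assets_def using payment_proportional[OF prio] bounds
  by (auto intro!: arg_cong[where f = sum_mset] image_mset_cong)

lemma assets_ge_ext:
  assumes prio: "\<forall>k\<in>#contracts S. prio k = 1"
    and bounds: "\<forall>k\<in>#contracts S. 0 \<le> r (debtor k) \<and> r (debtor k) \<le> 1 \<and> 0 \<le> liab r k"
  shows "ext S v \<le> assets S r v"
  unfolding assets_proportional[OF assms]
  using bounds by (simp add: sum_mset_nonneg)

lemma solution_rate:
  "is_solution S r \<Longrightarrow> v \<in> banks S \<Longrightarrow>
   r v = (if liab_bank S r v \<le> assets S r v then 1 else assets S r v / liab_bank S r v)"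
  by (auto simp: is_solution_def not_le)

definition shared_contracts :: "nat contract multiset" where
  "shared_contracts =
     {#Debt 0 6 1 1, Debt 1 6 1 1, Debt 4 2 4 1, Debt 5 3 4 1,
       CDS 4 6 1 24 1, CDS 6 4 0 24 1, CDS 5 6 0 24 1, CDS 6 5 1 24 1,
       Debt 2 6 1 1, CDS 2 6 0 5 1, Debt 3 6 1 1, CDS 3 6 1 5 1#}"

text \<open>Banks 0, 1 are u1, u2; banks 2, 3 are v1, v2; banks 4, 5 are w1, w2; bank 6 is the large bank.\<close>

definition dilemma :: "nat fsys" where
  "dilemma =
     \<lparr>banks = {0, 1, 2, 3, 4, 5, 6},
      ext = (\<lambda>v. if v \<le> 1 then 1 else if v = 4 \<or> v = 5 then 4 else if v = 6 then 100 else 0),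
      nprio = 1,
      contracts = {#Debt 0 2 1 1, Debt 1 3 1 1#} + shared_contracts\<rparr>"

definition dilemma_game :: "bool \<Rightarrow> bool \<Rightarrow> nat fsys" where
  "dilemma_game = subsys dilemma (Debt 0 2 1 1) (Debt 1 3 1 1)"

lemma base_model_dilemma: "base_model dilemma"
  unfolding base_model_def wf_fsys_def dilemma_def shared_contracts_def
  by (auto simp: wf_contract_def intro: exI[of _ 6] exI[of _ 1])

lemma dilemma_game_simps:
  "banks (dilemma_game s1 s2) = {0, 1, 2, 3, 4, 5, 6}"
  "ext (dilemma_game s1 s2) = ext dilemma"
  "contracts (dilemma_game s1 s2) =
     (if s1 then {#} else {#Debt 0 2 1 1#}) + (if s2 then {#} else {#Debt 1 3 1 1#}) + shared_contracts"
  by (auto simp: dilemma_game_def subsys_def delete_contract_def dilemma_def)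

context
  fixes s1 s2 :: bool and r :: "nat \<Rightarrow> real"
  assumes rates: "\<forall>v\<in>{0, 1, 2, 3, 4, 5, 6}. 0 \<le> r v \<and> r v \<le> 1"
begin

private lemma dilemma_game_prio: "\<forall>k\<in>#contracts (dilemma_game s1 s2). prio k = 1"
  unfolding dilemma_game_simps by (simp add: shared_contracts_def)

private lemma dilemma_game_bounds:
  "\<forall>k\<in>#contracts (dilemma_game s1 s2). 0 \<le> r (debtor k) \<and> r (debtor k) \<le> 1 \<and> 0 \<le> liab r k"
  using rates unfolding dilemma_game_simps by (simp add: shared_contracts_def)

lemma dilemma_balance_sheets:
  "liab_bank (dilemma_game s1 s2) r 0 = (if s1 then 1 else 2)"
  "assets (dilemma_game s1 s2) r 0 = 1"
  "liab_bank (dilemma_game s1 s2) r 1 = (if s2 then 1 else 2)"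
  "assets (dilemma_game s1 s2) r 1 = 1"
  "liab_bank (dilemma_game s1 s2) r 2 = 1 + 5 * (1 - r 0)"
  "assets (dilemma_game s1 s2) r 2 = (if s1 then 0 else r 0) + 4 * r 4"
  "liab_bank (dilemma_game s1 s2) r 3 = 1 + 5 * (1 - r 1)"
  "assets (dilemma_game s1 s2) r 3 = (if s2 then 0 else r 1) + 4 * r 5"
  "liab_bank (dilemma_game s1 s2) r 4 = 4 + 24 * (1 - r 1)"
  "assets (dilemma_game s1 s2) r 4 = 4 + 24 * (1 - r 0) * r 6"
  "liab_bank (dilemma_game s1 s2) r 5 = 4 + 24 * (1 - r 0)"
  "assets (dilemma_game s1 s2) r 5 = 4 + 24 * (1 - r 1) * r 6"
  "liab_bank (dilemma_game s1 s2) r 6 = 24 * (1 - r 0) + 24 * (1 - r 1)"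
  unfolding assets_proportional[OF dilemma_game_prio dilemma_game_bounds] liab_bank_def dilemma_game_simps
  by (simp_all add: shared_contracts_def dilemma_def algebra_simps)

lemma dilemma_large_bank_assets: "100 \<le> assets (dilemma_game s1 s2) r 6"
  using assets_ge_ext[OF dilemma_game_prio dilemma_game_bounds, of 6]
  unfolding dilemma_game_simps by (simp add: dilemma_def)

end

definition dilemma_rate :: "bool \<Rightarrow> bool \<Rightarrow> nat \<Rightarrow> real" where
  "dilemma_rate s1 s2 v =
     (if v = 0 then (if s1 then 1 else 1/2)
      else if v = 1 then (if s2 then 1 else 1/2)
      else if v = 4 \<and> s1 \<and> \<not> s2 then 1/4
      else if v = 5 \<and> \<not> s1 \<and> s2 then 1/4
      else 1)"

lemma dilemma_rate_bounds: "\<forall>v\<in>{0, 1, 2, 3, 4, 5, 6}. 0 \<le> dilemma_rate s1 s2 v \<and> dilemma_rate s1 s2 v \<le> 1"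
  by (simp add: dilemma_rate_def)

lemma dilemma_rate_solution: "is_solution (dilemma_game s1 s2) (dilemma_rate s1 s2)"
proof -
  \<comment> \<open>\<open>simp\<close> rewrites the bank \<open>1\<close> to \<open>Suc 0\<close>, so the equations are normalised the same way.\<close>
  note sheets = dilemma_balance_sheets[OF dilemma_rate_bounds, simplified]
  have "100 \<le> assets (dilemma_game s1 s2) (dilemma_rate s1 s2) 6"
    by (rule dilemma_large_bank_assets) (rule dilemma_rate_bounds)
  then have
    "liab_bank (dilemma_game s1 s2) (dilemma_rate s1 s2) 6 \<le> assets (dilemma_game s1 s2) (dilemma_rate s1 s2) 6"
    by (cases s1; cases s2) (simp_all add: sheets dilemma_rate_def)
  then show ?thesis
    unfolding is_solution_def dilemma_game_simps(1)
    by (cases s1; cases s2) (simp_all add: sheets dilemma_rate_def)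
qed

lemma dilemma_solution_unique:
  assumes sol: "is_solution (dilemma_game s1 s2) r"
  shows "\<forall>v\<in>banks (dilemma_game s1 s2). r v = dilemma_rate s1 s2 v"
proof -
  have rates: "\<forall>v\<in>{0, 1, 2, 3, 4, 5, 6}. 0 \<le> r v \<and> r v \<le> 1"
    using sol by (simp add: is_solution_def dilemma_game_simps)
  have rate: "r v = (if L \<le> A then 1 else A / L)"
    if "v \<in> {0, 1, 2, 3, 4, 5, 6}" "liab_bank (dilemma_game s1 s2) r v = L"
       "assets (dilemma_game s1 s2) r v = A" for v L A
    using solution_rate[OF sol, of v] that by (simp add: dilemma_game_simps)
  note sheets = dilemma_balance_sheets[OF rates, simplified]
  have r0: "r 0 = (if s1 then 1 else 1/2)" and r1: "r 1 = (if s2 then 1 else 1/2)"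
    using rate[of 0] rate[of 1] by (simp_all add: sheets)
  have "liab_bank (dilemma_game s1 s2) r 6 \<le> 48"
    using rates by (simp add: sheets)
  also have "\<dots> \<le> assets (dilemma_game s1 s2) r 6"
    using dilemma_large_bank_assets[OF rates, of s1 s2] by simp
  finally have r6: "r 6 = 1"
    using solution_rate[OF sol, of 6] by (simp add: dilemma_game_simps)
  have r4: "r 4 = (if s1 \<and> \<not> s2 then 1/4 else 1)" and r5: "r 5 = (if \<not> s1 \<and> s2 then 1/4 else 1)"
    using rate[of 4] rate[of 5] r0 r1 r6 by (simp_all add: sheets)
  have "r 2 = 1" and "r 3 = 1"
    using rate[of 2] rate[of 3] r0 r1 r4 r5 by (simp_all add: sheets)
  with r0 r1 r4 r5 r6 show ?thesis
    by (simp add: dilemma_game_simps dilemma_rate_def)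
qed

lemma unique_solution_dilemma_rate: "unique_solution (dilemma_game s1 s2) (dilemma_rate s1 s2)"
  using dilemma_rate_solution dilemma_solution_unique by (simp add: unique_solution_def)

lemma dilemma_payoffs:
  "payoff (dilemma_game s1 s2) (dilemma_rate s1 s2) 2 = (if s1 then if s2 then 3 else 0 else 1)"
  "payoff (dilemma_game s1 s2) (dilemma_rate s1 s2) 3 = (if s2 then if s1 then 3 else 0 else 1)"
  unfolding payoff_def dilemma_balance_sheets[OF dilemma_rate_bounds]
  by (simp_all add: dilemma_rate_def)

theorem mainTheorem11:
  shows "\<exists>(S :: nat fsys) u1 u2 v1 v2 c1 c2.
    base_model S \<and> distinct [u1, u2, v1, v2] \<and> c1 > 0 \<and> c2 > 0 \<and>
    Debt u1 v1 c1 1 \<in># contracts S \<and> Debt u2 v2 c2 1 \<in># contracts S \<and>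
    (\<forall>s1 s2. \<exists>r. unique_solution (subsys S (Debt u1 v1 c1 1) (Debt u2 v2 c2 1) s1 s2) r \<and>
       (let T = subsys S (Debt u1 v1 c1 1) (Debt u2 v2 c2 1) s1 s2;
            q = (payoff T r v1, payoff T r v2) in
        (s1 \<and> s2 \<longrightarrow> q = (3, 3)) \<and>
        (\<not> s1 \<and> \<not> s2 \<longrightarrow> q = (1, 1)) \<and>
        (s1 \<and> \<not> s2 \<longrightarrow> q = (0, 1)) \<and>
        (\<not> s1 \<and> s2 \<longrightarrow> q = (1, 0))))"
proof -
  have debts: "Debt 0 2 1 1 \<in># contracts dilemma" "Debt 1 3 1 1 \<in># contracts dilemma"
    by (simp_all add: dilemma_def)
  show ?thesis
    by (rule exI[of _ dilemma], rule exI[of _ 0], rule exI[of _ 1], rule exI[of _ 2],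
        rule exI[of _ 3], rule exI[of _ 1], rule exI[of _ 1], fold dilemma_game_def)
      (use base_model_dilemma debts unique_solution_dilemma_rate dilemma_payoffs in
        \<open>auto simp: Let_def intro!: exI[where x = "dilemma_rate s1 s2" for s1 s2]\<close>)
qed

end
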